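(* Let $M$ be a tabular MDP with finite $\mathcal S,\mathcal A$, transition model $P$, and reward $r(\cdot;\theta^* )$ with $|r(s,a;\theta^* )|\le R_{\max}$. Let $\gamma^*,\tilde\gamma\in(0,1)$ be two discount factors, and let $Q^*,\tilde Q$ be the fixed points of the soft Bellman update using discount $\gamma^*$ and $\tilde\gamma$ respectively, with policies $\pi^*(a\mid s;\theta^* )\propto\exp(Q^*(s,a;\theta^* ))$ and $\tilde\pi(a\mid s;\theta^* )\propto\exp(\tilde Q(s,a;\theta^* ))$. Then $$\mathbb E_{s\sim w^*}\big[D_{\mathrm{KL}}(\pi^*(\cdot\mid s;\theta^* )\,\|\,\tilde\pi(\cdot\mid s;\theta^* ))\big]\le\frac{2|\mathcal A|R_{\max}}{(1-\tilde\gamma)(1-\gamma^* )}\,|\tilde\gamma-\gamma^*| .$$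
   Context: The soft Bellman update with transition model $P$ and discount $\gamma$ is $Q(s,a;\theta)=r(s,a;\theta)+\gamma\sum_{s'}P(s'\mid s,a)V(s';\theta)$, $V(s;\theta)=\log\sum_{a\in\mathcal A}\exp(Q(s,a;\theta))$. $w^*$ is the discounted stationary state distribution of $\pi^*$ (under the true MDP). *)

theory Defs
  imports Complex_Main
begin

text \<open>Tabular MDP with finite state type 's and finite action type 'a.
  Transition model P s a s' = P(s' | s, a); reward r s a = r(s,a;theta*).\<close>

definition soft_V :: "('s \<Rightarrow> 'a::finite \<Rightarrow> real) \<Rightarrow> 's \<Rightarrow> real" where
  "soft_V Q s = ln (\<Sum>a\<in>UNIV. exp (Q s a))"

definition soft_bellman ::
  "('s \<Rightarrow> 'a::finite \<Rightarrow> real) \<Rightarrow> ('s::finite \<Rightarrow> 'a \<Rightarrow> 's \<Rightarrow> real) \<Rightarrow> real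
   \<Rightarrow> ('s \<Rightarrow> 'a \<Rightarrow> real) \<Rightarrow> 's \<Rightarrow> 'a \<Rightarrow> real" where
  "soft_bellman r P \<gamma> Q s a = r s a + \<gamma> * (\<Sum>s'\<in>UNIV. P s a s' * soft_V Q s')"

definition softmax_policy :: "('s \<Rightarrow> 'a::finite \<Rightarrow> real) \<Rightarrow> 's \<Rightarrow> 'a \<Rightarrow> real" where
  "softmax_policy Q s a = exp (Q s a) / (\<Sum>b\<in>UNIV. exp (Q s b))"

definition is_stoch_kernel :: "('s::finite \<Rightarrow> 'a::finite \<Rightarrow> 's \<Rightarrow> real) \<Rightarrow> bool" where
  "is_stoch_kernel P \<longleftrightarrow> (\<forall>s a s'. 0 \<le> P s a s') \<and> (\<forall>s a. (\<Sum>s'\<in>UNIV. P s a s') = 1)"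

definition is_distribution :: "('s::finite \<Rightarrow> real) \<Rightarrow> bool" where
  "is_distribution \<rho> \<longleftrightarrow> (\<forall>s. 0 \<le> \<rho> s) \<and> (\<Sum>s\<in>UNIV. \<rho> s) = 1"

fun state_occ :: "('s::finite \<Rightarrow> real) \<Rightarrow> ('s \<Rightarrow> 'a::finite \<Rightarrow> real)
    \<Rightarrow> ('s \<Rightarrow> 'a \<Rightarrow> 's \<Rightarrow> real) \<Rightarrow> nat \<Rightarrow> 's \<Rightarrow> real" where
  "state_occ \<rho> \<pi> P 0 s' = \<rho> s'"
| "state_occ \<rho> \<pi> P (Suc t) s' =
     (\<Sum>s\<in>UNIV. state_occ \<rho> \<pi> P t s * (\<Sum>a\<in>UNIV. \<pi> s a * P s a s'))"

definition disc_state_dist :: "real \<Rightarrow> ('s::finite \<Rightarrow> real) \<Rightarrow> ('s \<Rightarrow> 'a::finite \<Rightarrow> real)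
    \<Rightarrow> ('s \<Rightarrow> 'a \<Rightarrow> 's \<Rightarrow> real) \<Rightarrow> 's \<Rightarrow> real" where
  "disc_state_dist \<gamma> \<rho> \<pi> P s = (1 - \<gamma>) * (\<Sum>t. \<gamma> ^ t * state_occ \<rho> \<pi> P t s)"

definition KL_div :: "('a::finite \<Rightarrow> real) \<Rightarrow> ('a \<Rightarrow> real) \<Rightarrow> real" where
  "KL_div p q = (\<Sum>a\<in>UNIV. p a * ln (p a / q a))"

end

theory Submission
  imports Defs
begin

text \<open>Subtracting the constant \<open>ln |A| / (1 - \<gamma>)\<close> from the soft value of a fixed point \<open>Q\<close>
  turns the fixed-point equation into \<open>W = log_sum_exp (r + \<gamma> P W) - ln |A|\<close>. Log-sum-exp is
  monotone, commutes with adding constants and is 1-Lipschitz in the sup norm, so \<open>W\<close> is bounded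
  by \<open>Rmax / (1 - \<gamma>)\<close>, and comparing the two fixed points as a perturbed contraction shows that
  \<open>Qs - Qt\<close> is, up to a constant shift, bounded by
  \<open>E = Rmax \<bar>\<gamma>t - \<gamma>s\<bar> / ((1 - \<gamma>t) (1 - \<gamma>s))\<close>.
  Softmax ignores constant shifts, so every KL divergence is at most \<open>2 E\<close>.\<close>

lemma expectation_le:
  fixes w f :: "'s::finite \<Rightarrow> real"
  assumes w: "is_distribution w" and f: "\<And>s. f s \<le> B"
  shows "(\<Sum>s\<in>UNIV. w s * f s) \<le> B"
proof -
  have "(\<Sum>s\<in>UNIV. w s * f s) \<le> (\<Sum>s\<in>UNIV. w s * B)"
    using w f by (intro sum_mono mult_left_mono) (auto simp: is_distribution_def)
  also have "\<dots> = B"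
    using w by (simp add: is_distribution_def flip: sum_distrib_right)
  finally show ?thesis .
qed

lemma abs_expectation_le:
  fixes w f :: "'s::finite \<Rightarrow> real"
  assumes w: "is_distribution w" and f: "\<And>s. \<bar>f s\<bar> \<le> B"
  shows "\<bar>\<Sum>s\<in>UNIV. w s * f s\<bar> \<le> B"
proof -
  have "(\<Sum>s\<in>UNIV. w s * f s) \<le> B"
    using f by (intro expectation_le[OF w]) (simp add: abs_le_iff)
  moreover have "(\<Sum>s\<in>UNIV. w s * - f s) \<le> B"
    using f by (intro expectation_le[OF w]) (simp add: abs_le_iff)
  ultimately show ?thesis
    by (simp add: sum_negf abs_le_iff)
qed

lemma is_stoch_kernel_iff: "is_stoch_kernel P \<longleftrightarrow> (\<forall>s a. is_distribution (P s a))"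
  by (auto simp: is_stoch_kernel_def is_distribution_def)

lemma softmax_policy_distribution: "is_distribution (softmax_policy Q s)"
proof -
  have "0 < (\<Sum>b\<in>UNIV. exp (Q s b))"
    by (rule sum_pos) auto
  then show ?thesis
    by (auto simp: is_distribution_def softmax_policy_def intro: divide_nonneg_pos
        simp flip: sum_divide_distrib)
qed

lemma state_occ_distribution:
  assumes P: "is_stoch_kernel P" and \<rho>: "is_distribution \<rho>"
    and \<pi>: "\<And>s. is_distribution (\<pi> s)"
  shows "is_distribution (state_occ \<rho> \<pi> P t)"
proof (induction t)
  case 0
  then show ?case using \<rho> by simp
next
  case (Suc t)
  have step: "is_distribution (\<lambda>s'. \<Sum>a\<in>UNIV. \<pi> s a * P s a s')" for s
  proof -
    have "(\<Sum>s'\<in>UNIV. \<Sum>a\<in>UNIV. \<pi> s a * P s a s') = (\<Sum>a\<in>UNIV. \<pi> s a * (\<Sum>s'\<in>UNIV. P s a s'))"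
      by (subst sum.swap) (simp add: sum_distrib_left)
    then show ?thesis
      using \<pi>[of s] P by (auto simp: is_distribution_def is_stoch_kernel_def intro!: sum_nonneg)
  qed
  have "(\<Sum>s'\<in>UNIV. state_occ \<rho> \<pi> P (Suc t) s')
      = (\<Sum>s\<in>UNIV. \<Sum>s'\<in>UNIV. state_occ \<rho> \<pi> P t s * (\<Sum>a\<in>UNIV. \<pi> s a * P s a s'))"
    unfolding state_occ.simps by (rule sum.swap)
  also have "\<dots> = (\<Sum>s\<in>UNIV. state_occ \<rho> \<pi> P t s * (\<Sum>s'\<in>UNIV. \<Sum>a\<in>UNIV. \<pi> s a * P s a s'))"
    by (simp add: sum_distrib_left)
  also have "\<dots> = 1"
    using Suc step by (simp add: is_distribution_def)
  finally show ?case
    using Suc step by (auto simp: is_distribution_def intro!: sum_nonneg)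
qed

lemma disc_state_dist_distribution:
  assumes P: "is_stoch_kernel P" and \<rho>: "is_distribution \<rho>"
    and \<pi>: "\<And>s. is_distribution (\<pi> s)" and \<gamma>: "0 \<le> \<gamma>" "\<gamma> < 1"
  shows "is_distribution (disc_state_dist \<gamma> \<rho> \<pi> P)"
proof -
  have occ: "0 \<le> state_occ \<rho> \<pi> P t s" "(\<Sum>s\<in>UNIV. state_occ \<rho> \<pi> P t s) = 1" for t s
    using state_occ_distribution[of P \<rho> \<pi> t] P \<rho> \<pi> by (auto simp: is_distribution_def)
  have occ_le_1: "state_occ \<rho> \<pi> P t s \<le> 1" for t s
  proof -
    have "state_occ \<rho> \<pi> P t s \<le> (\<Sum>s\<in>UNIV. state_occ \<rho> \<pi> P t s)"
      by (rule member_le_sum) (use occ in auto)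
    then show ?thesis
      using occ by simp
  qed
  have summable: "summable (\<lambda>t. \<gamma> ^ t * state_occ \<rho> \<pi> P t s)" for s
  proof (rule summable_comparison_test[OF _ summable_geometric[of \<gamma>]])
    show "\<exists>N. \<forall>t\<ge>N. norm (\<gamma> ^ t * state_occ \<rho> \<pi> P t s) \<le> \<gamma> ^ t"
      using occ occ_le_1 \<gamma> by (auto intro!: mult_left_le simp: abs_mult)
  qed (use \<gamma> in auto)
  have "(\<Sum>s\<in>UNIV. \<Sum>t. \<gamma> ^ t * state_occ \<rho> \<pi> P t s) = (\<Sum>t. \<Sum>s\<in>UNIV. \<gamma> ^ t * state_occ \<rho> \<pi> P t s)"
    using summable by (intro suminf_sum[symmetric]) auto
  also have "\<dots> = 1 / (1 - \<gamma>)"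
    using occ \<gamma> by (simp add: suminf_geometric flip: sum_distrib_left)
  moreover have "0 \<le> disc_state_dist \<gamma> \<rho> \<pi> P s" for s
    unfolding disc_state_dist_def using \<gamma> occ summable
    by (auto intro!: mult_nonneg_nonneg suminf_nonneg)
  ultimately show ?thesis
    using \<gamma> by (simp add: is_distribution_def disc_state_dist_def flip: sum_distrib_left)
qed

definition log_sum_exp :: "('a::finite \<Rightarrow> real) \<Rightarrow> real" where
  "log_sum_exp x = ln (\<Sum>a\<in>UNIV. exp (x a))"

lemma soft_V_eq_log_sum_exp: "soft_V Q s = log_sum_exp (Q s)"
  by (simp add: soft_V_def log_sum_exp_def)

lemma log_sum_exp_add_const: "log_sum_exp (\<lambda>a. x a + c) = log_sum_exp x + c"
proof -
  have "0 < (\<Sum>a\<in>UNIV. exp (x a))"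
    by (rule sum_pos) auto
  then show ?thesis
    by (simp add: log_sum_exp_def exp_add ln_mult flip: sum_distrib_right)
qed

lemma log_sum_exp_const: "log_sum_exp (\<lambda>_::'a::finite. c) = c + ln (real (card (UNIV :: 'a set)))"
  by (simp add: log_sum_exp_def ln_mult)

lemma log_sum_exp_le_add:
  assumes "\<And>a. x a \<le> y a + E"
  shows "log_sum_exp x \<le> log_sum_exp y + E"
proof -
  have "(\<Sum>a\<in>UNIV. exp (x a)) \<le> (\<Sum>a\<in>UNIV. exp (y a + E))"
    using assms by (intro sum_mono) simp
  moreover have "0 < (\<Sum>a\<in>UNIV. exp (x a))"
    by (rule sum_pos) auto
  ultimately have "log_sum_exp x \<le> log_sum_exp (\<lambda>a. y a + E)"
    by (simp add: log_sum_exp_def)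
  then show ?thesis
    by (simp add: log_sum_exp_add_const)
qed

lemma abs_log_sum_exp_diff_le:
  assumes "\<And>a. \<bar>x a - y a\<bar> \<le> B"
  shows "\<bar>log_sum_exp x - log_sum_exp y\<bar> \<le> B"
proof -
  have "x a \<le> y a + B" "y a \<le> x a + B" for a
    using assms[of a] by (auto simp: abs_le_iff)
  then have "log_sum_exp x \<le> log_sum_exp y + B" "log_sum_exp y \<le> log_sum_exp x + B"
    by (auto intro: log_sum_exp_le_add)
  then show ?thesis
    by (simp add: abs_le_iff)
qed

lemma abs_log_sum_exp_minus_ln_card_le:
  fixes x :: "'a::finite \<Rightarrow> real"
  assumes "\<And>a. \<bar>x a\<bar> \<le> B"
  shows "\<bar>log_sum_exp x - ln (real (card (UNIV :: 'a set)))\<bar> \<le> B"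
  using abs_log_sum_exp_diff_le[of x "\<lambda>_. 0" B] assms by (simp add: log_sum_exp_const)

lemma softmax_policy_pos: "0 < softmax_policy Q s a"
proof -
  have "0 < (\<Sum>b\<in>UNIV. exp (Q s b))"
    by (rule sum_pos) auto
  then show ?thesis
    by (simp add: softmax_policy_def)
qed

lemma ln_softmax_policy: "ln (softmax_policy Q s a) = Q s a - soft_V Q s"
proof -
  have "0 < (\<Sum>b\<in>UNIV. exp (Q s b))"
    by (rule sum_pos) auto
  then show ?thesis
    by (simp add: softmax_policy_def soft_V_def ln_div)
qed

lemma KL_div_softmax_policy_le:
  assumes "\<And>a. \<bar>Q s a - Q' s a - K\<bar> \<le> E"
  shows "KL_div (softmax_policy Q s) (softmax_policy Q' s) \<le> 2 * E"
proof -
  have V: "\<bar>soft_V Q s - (soft_V Q' s + K)\<bar> \<le> E"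
    using abs_log_sum_exp_diff_le[of "Q s" "\<lambda>a. Q' s a + K" E] assms
    by (simp only: soft_V_eq_log_sum_exp log_sum_exp_add_const diff_diff_eq)
  have "ln (softmax_policy Q s a / softmax_policy Q' s a)
        = (Q s a - Q' s a - K) - (soft_V Q s - (soft_V Q' s + K))" for a
    using softmax_policy_pos[of Q s a] softmax_policy_pos[of Q' s a]
    by (simp only: ln_div ln_softmax_policy) simp
  then have "ln (softmax_policy Q s a / softmax_policy Q' s a) \<le> 2 * E" for a
    using assms[of a] V by (simp add: abs_le_iff)
  then show ?thesis
    unfolding KL_div_def by (rule expectation_le[OF softmax_policy_distribution])
qed

lemma abs_le_of_Max_contraction:
  fixes f :: "'s::finite \<Rightarrow> real"
  assumes rec: "\<And>s. \<bar>f s\<bar> \<le> \<gamma> * Max (range (\<lambda>s. \<bar>f s\<bar>)) + b" and \<gamma>: "\<gamma> < 1"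
  shows "\<bar>f s\<bar> \<le> b / (1 - \<gamma>)"
proof -
  define M where "M = Max (range (\<lambda>s. \<bar>f s\<bar>))"
  have "M \<in> range (\<lambda>s. \<bar>f s\<bar>)"
    unfolding M_def by (rule Max_in) auto
  then obtain s0 where "\<bar>f s0\<bar> = M"
    by auto
  then have "M \<le> b / (1 - \<gamma>)"
    using rec[of s0] \<gamma> by (simp add: M_def field_simps)
  moreover have "\<bar>f s\<bar> \<le> M"
    by (simp add: M_def)
  ultimately show ?thesis by linarith
qed

definition lookahead ::
  "('s \<Rightarrow> 'a \<Rightarrow> real) \<Rightarrow> ('s::finite \<Rightarrow> 'a \<Rightarrow> 's \<Rightarrow> real) \<Rightarrow> real \<Rightarrow> ('s \<Rightarrow> real) \<Rightarrow> 's \<Rightarrow> 'a \<Rightarrow> real"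
  where "lookahead r P \<gamma> W s a = r s a + \<gamma> * (\<Sum>s'\<in>UNIV. P s a s' * W s')"

lemma soft_bellman_fixed_point_normalized:
  fixes Q :: "'s::finite \<Rightarrow> 'a::finite \<Rightarrow> real"
  assumes P: "is_stoch_kernel P" and \<gamma>: "\<gamma> < 1" and fixed: "soft_bellman r P \<gamma> Q = Q"
  defines "c \<equiv> ln (real (card (UNIV :: 'a set))) / (1 - \<gamma>)"
  defines "W \<equiv> \<lambda>s. soft_V Q s - c"
  shows "Q s a = lookahead r P \<gamma> W s a + \<gamma> * c"
    and "W s = log_sum_exp (lookahead r P \<gamma> W s) - ln (real (card (UNIV :: 'a set)))"
proof -
  have avg: "(\<Sum>s'\<in>UNIV. P s a s' * soft_V Q s') = (\<Sum>s'\<in>UNIV. P s a s' * W s') + c" for s a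
    using P by (simp add: W_def is_stoch_kernel_def right_diff_distrib sum_subtractf
        flip: sum_distrib_right)
  have Q: "Q s a = lookahead r P \<gamma> W s a + \<gamma> * c" for s a
  proof -
    have "Q s a = r s a + \<gamma> * (\<Sum>s'\<in>UNIV. P s a s' * soft_V Q s')"
      using fun_cong[OF fun_cong[OF fixed, of s], of a] by (simp add: soft_bellman_def)
    then show ?thesis
      by (simp only: avg lookahead_def distrib_left add.assoc)
  qed
  then show "Q s a = lookahead r P \<gamma> W s a + \<gamma> * c" .
  have "Q s = (\<lambda>a. lookahead r P \<gamma> W s a + \<gamma> * c)"
    using Q by blast
  then have "soft_V Q s = log_sum_exp (lookahead r P \<gamma> W s) + \<gamma> * c"
    by (simp only: soft_V_eq_log_sum_exp log_sum_exp_add_const)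
  then have "W s = log_sum_exp (lookahead r P \<gamma> W s) - (1 - \<gamma>) * c"
    by (simp add: W_def algebra_simps)
  also have "(1 - \<gamma>) * c = ln (real (card (UNIV :: 'a set)))"
    using \<gamma> by (simp add: c_def)
  finally show "W s = log_sum_exp (lookahead r P \<gamma> W s) - ln (real (card (UNIV :: 'a set)))" .
qed

locale normalized_soft_fixed_point =
  fixes r :: "'s::finite \<Rightarrow> 'a::finite \<Rightarrow> real" and P :: "'s \<Rightarrow> 'a \<Rightarrow> 's \<Rightarrow> real"
    and Rmax \<gamma> :: real and W :: "'s \<Rightarrow> real"
  assumes kernel: "is_stoch_kernel P"
    and reward_bound: "\<And>s a. \<bar>r s a\<bar> \<le> Rmax"
    and discount: "0 \<le> \<gamma>" "\<gamma> < 1"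
    and fixed_point: "\<And>s. W s = log_sum_exp (lookahead r P \<gamma> W s) - ln (real (card (UNIV :: 'a set)))"
begin

lemma abs_le: "\<bar>W s\<bar> \<le> Rmax / (1 - \<gamma>)"
proof (rule abs_le_of_Max_contraction[OF _ discount(2)])
  fix s
  define M where "M = Max (range (\<lambda>s. \<bar>W s\<bar>))"
  have "\<bar>lookahead r P \<gamma> W s a\<bar> \<le> \<gamma> * M + Rmax" for a
  proof -
    have "\<bar>\<Sum>s'\<in>UNIV. P s a s' * W s'\<bar> \<le> M"
      using kernel by (intro abs_expectation_le) (auto simp: M_def is_stoch_kernel_iff)
    then have "\<bar>\<gamma> * (\<Sum>s'\<in>UNIV. P s a s' * W s')\<bar> \<le> \<gamma> * M"
      using discount by (simp add: abs_mult mult_left_mono)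
    then show ?thesis
      using reward_bound[of s a] by (simp add: lookahead_def)
  qed
  then show "\<bar>W s\<bar> \<le> \<gamma> * M + Rmax"
    by (subst fixed_point) (rule abs_log_sum_exp_minus_ln_card_le)
qed

end

text \<open>The fixed point for \<open>\<gamma>\<close> is compared with the one for \<open>\<gamma>'\<close> through
  \<open>\<gamma> W - \<gamma>' W' = \<gamma> (W - W') + (\<gamma> - \<gamma>') W'\<close>: the first term contracts, the second is a
  perturbation of size \<open>\<bar>\<gamma> - \<gamma>'\<bar> Rmax / (1 - \<gamma>')\<close>.\<close>

lemma lookahead_discount_perturbation:
  assumes W: "normalized_soft_fixed_point r P Rmax \<gamma> W"
    and W': "normalized_soft_fixed_point r P Rmax \<gamma>' W'"
  shows "\<bar>lookahead r P \<gamma> W s a - lookahead r P \<gamma>' W' s a\<bar>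
         \<le> Rmax / ((1 - \<gamma>') * (1 - \<gamma>)) * \<bar>\<gamma>' - \<gamma>\<bar>"
proof -
  interpret W: normalized_soft_fixed_point r P Rmax \<gamma> W by (fact W)
  interpret W': normalized_soft_fixed_point r P Rmax \<gamma>' W' by (fact W')
  define \<delta> where "\<delta> = \<bar>\<gamma>' - \<gamma>\<bar> * (Rmax / (1 - \<gamma>'))"
  have lookahead_diff: "\<bar>lookahead r P \<gamma> W s a - lookahead r P \<gamma>' W' s a\<bar> \<le> \<gamma> * D + \<delta>"
    if D: "\<And>s'. \<bar>W s' - W' s'\<bar> \<le> D" for s a D
  proof -
    have "\<bar>\<gamma> * W s' - \<gamma>' * W' s'\<bar> \<le> \<gamma> * D + \<delta>" for s'
    proof -
      have "\<gamma> * W s' - \<gamma>' * W' s' = \<gamma> * (W s' - W' s') + (\<gamma> - \<gamma>') * W' s'"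
        by (simp add: algebra_simps)
      moreover have "\<bar>\<gamma> * (W s' - W' s')\<bar> \<le> \<gamma> * D"
        using W.discount D[of s'] by (simp add: abs_mult mult_left_mono)
      moreover have "\<bar>(\<gamma> - \<gamma>') * W' s'\<bar> \<le> \<delta>"
        unfolding \<delta>_def abs_mult abs_minus_commute[of \<gamma>]
        by (rule mult_left_mono[OF W'.abs_le abs_ge_zero])
      ultimately show ?thesis
        using abs_triangle_ineq[of "\<gamma> * (W s' - W' s')" "(\<gamma> - \<gamma>') * W' s'"] by linarith
    qed
    then have "\<bar>\<Sum>s'\<in>UNIV. P s a s' * (\<gamma> * W s' - \<gamma>' * W' s')\<bar> \<le> \<gamma> * D + \<delta>"
      using W.kernel by (intro abs_expectation_le) (auto simp: is_stoch_kernel_iff)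
    then show ?thesis
      by (simp add: lookahead_def algebra_simps sum_subtractf sum_distrib_left)
  qed
  have D: "\<bar>W s - W' s\<bar> \<le> \<delta> / (1 - \<gamma>)" for s
  proof (rule abs_le_of_Max_contraction[OF _ W.discount(2)])
    fix s
    have "\<bar>W s - W' s\<bar>
          = \<bar>log_sum_exp (lookahead r P \<gamma> W s) - log_sum_exp (lookahead r P \<gamma>' W' s)\<bar>"
      by (subst W.fixed_point, subst W'.fixed_point) simp
    also have "\<dots> \<le> \<gamma> * Max (range (\<lambda>s. \<bar>W s - W' s\<bar>)) + \<delta>"
      by (intro abs_log_sum_exp_diff_le lookahead_diff) simp
    finally show "\<bar>W s - W' s\<bar> \<le> \<gamma> * Max (range (\<lambda>s. \<bar>W s - W' s\<bar>)) + \<delta>" .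
  qed
  have "\<gamma> * (\<delta> / (1 - \<gamma>)) + \<delta> = \<delta> / (1 - \<gamma>)"
    using W.discount by (simp add: field_simps)
  also have "\<dots> = Rmax / ((1 - \<gamma>') * (1 - \<gamma>)) * \<bar>\<gamma>' - \<gamma>\<bar>"
    by (simp add: \<delta>_def)
  finally have "\<gamma> * (\<delta> / (1 - \<gamma>)) + \<delta> = Rmax / ((1 - \<gamma>') * (1 - \<gamma>)) * \<bar>\<gamma>' - \<gamma>\<bar>" .
  then show ?thesis
    using lookahead_diff[OF D, of s a] by simp
qed

lemma soft_bellman_fixed_point_discount_perturbation:
  fixes Q Q' :: "'s::finite \<Rightarrow> 'a::finite \<Rightarrow> real"
  assumes P: "is_stoch_kernel P" and r: "\<And>s a. \<bar>r s a\<bar> \<le> Rmax"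
    and \<gamma>: "0 \<le> \<gamma>" "\<gamma> < 1" and \<gamma>': "0 \<le> \<gamma>'" "\<gamma>' < 1"
    and Q: "soft_bellman r P \<gamma> Q = Q" and Q': "soft_bellman r P \<gamma>' Q' = Q'"
  defines "c \<equiv> ln (real (card (UNIV :: 'a set))) / (1 - \<gamma>)"
    and "c' \<equiv> ln (real (card (UNIV :: 'a set))) / (1 - \<gamma>')"
  shows "\<bar>Q s a - Q' s a - (\<gamma> * c - \<gamma>' * c')\<bar> \<le> Rmax / ((1 - \<gamma>') * (1 - \<gamma>)) * \<bar>\<gamma>' - \<gamma>\<bar>"
proof -
  define W where "W = (\<lambda>s. soft_V Q s - c)"
  define W' where "W' = (\<lambda>s. soft_V Q' s - c')"
  note Q = soft_bellman_fixed_point_normalized[OF P \<gamma>(2) Q, folded c_def]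
  note Q' = soft_bellman_fixed_point_normalized[OF P \<gamma>'(2) Q', folded c'_def]
  have "normalized_soft_fixed_point r P Rmax \<gamma> W" "normalized_soft_fixed_point r P Rmax \<gamma>' W'"
    unfolding W_def W'_def
    by (rule normalized_soft_fixed_point.intro[OF P r \<gamma> Q(2)],
        rule normalized_soft_fixed_point.intro[OF P r \<gamma>' Q'(2)])
  then show ?thesis
    using lookahead_discount_perturbation[of r P Rmax \<gamma> W \<gamma>' W' s a]
    by (simp add: Q(1)[folded W_def] Q'(1)[folded W'_def])
qed

theorem corollary2:
  fixes P :: "'s::finite \<Rightarrow> 'a::finite \<Rightarrow> 's \<Rightarrow> real"
    and r :: "'s \<Rightarrow> 'a \<Rightarrow> real"
    and \<rho>0 :: "'s \<Rightarrow> real"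
    and Rmax \<gamma>s \<gamma>t :: real
    and Qs Qt :: "'s \<Rightarrow> 'a \<Rightarrow> real"
  assumes P: "is_stoch_kernel P"
    and rho0: "is_distribution \<rho>0"
    and rbound: "\<And>s a. \<bar>r s a\<bar> \<le> Rmax"
    and gs: "0 < \<gamma>s" "\<gamma>s < 1"
    and gt: "0 < \<gamma>t" "\<gamma>t < 1"
    and Qs_fix: "soft_bellman r P \<gamma>s Qs = Qs"
    and Qt_fix: "soft_bellman r P \<gamma>t Qt = Qt"
  shows "(\<Sum>s\<in>UNIV. disc_state_dist \<gamma>s \<rho>0 (softmax_policy Qs) P s
            * KL_div (softmax_policy Qs s) (softmax_policy Qt s))
         \<le> 2 * real (card (UNIV :: 'a set)) * Rmax / ((1 - \<gamma>t) * (1 - \<gamma>s)) * \<bar>\<gamma>t - \<gamma>s\<bar>"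
proof -
  define E where "E = Rmax / ((1 - \<gamma>t) * (1 - \<gamma>s)) * \<bar>\<gamma>t - \<gamma>s\<bar>"
  have "KL_div (softmax_policy Qs s) (softmax_policy Qt s) \<le> 2 * E" for s
    using soft_bellman_fixed_point_discount_perturbation[OF P rbound _ gs(2) _ gt(2) Qs_fix Qt_fix] gs gt
    unfolding E_def by (intro KL_div_softmax_policy_le) auto
  moreover have "is_distribution (disc_state_dist \<gamma>s \<rho>0 (softmax_policy Qs) P)"
    using gs by (intro disc_state_dist_distribution[OF P rho0] softmax_policy_distribution) auto
  ultimately have "(\<Sum>s\<in>UNIV. disc_state_dist \<gamma>s \<rho>0 (softmax_policy Qs) P s
            * KL_div (softmax_policy Qs s) (softmax_policy Qt s)) \<le> 2 * E"
    by (intro expectation_le)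
  also have "\<dots> \<le> 2 * real (card (UNIV :: 'a set)) * E"
  proof (rule mult_right_mono)
    show "2 \<le> 2 * real (card (UNIV :: 'a set))"
      by (simp add: Suc_le_eq card_gt_0_iff)
    show "0 \<le> E"
      using rbound[of undefined undefined] gs gt by (simp add: E_def)
  qed
  finally show ?thesis
    by (simp add: E_def)
qed

end
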